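(* Let $\|\cdot\|$ be any norm on $\mathbb{R}^d$. Suppose $\mathcal{S}$ is a finite collection of subsets of $\mathbb{R}^d$, each with at least $2$ elements, and let $\mathcal{H}(\mathcal{S})=(\mathbb{R}^d,E(\mathcal{S}))$ where $E(\mathcal{S})=\{T\subseteq\mathbb{R}^d \mid T \text{ is congruent in } (\mathbb{R}^d,\|\cdot\|) \text{ to some } S\in\mathcal{S}\}$. Then $\chi(\mathcal{H}(\mathcal{S}))<\infty$.
   Context: Two sets $X,Y\subseteq\mathbb{R}^d$ are congruent in $(\mathbb{R}^d,\|\cdot\|)$ iff one is the image of the other under a composition, in either order, of a surjective linear isometry of $(\mathbb{R}^d,\|\cdot\|)$ and a translation. A hypergraph $(V,E)$ has edges that are subsets of $V$ of size at least $2$; a proper coloring makes no edge monochromatic; $\chi$ is the least number of colors in a proper coloring. *)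

theory Defs
  imports "HOL-Analysis.Analysis"
begin

definition is_norm :: "(real ^ 'd \<Rightarrow> real) \<Rightarrow> bool" where
  "is_norm N \<longleftrightarrow>
     (\<forall>x. N x = 0 \<longleftrightarrow> x = 0) \<and>
     (\<forall>a x. N (a *\<^sub>R x) = \<bar>a\<bar> * N x) \<and>
     (\<forall>x y. N (x + y) \<le> N x + N y)"

definition surj_lin_isometry :: "(real ^ 'd \<Rightarrow> real) \<Rightarrow> (real ^ 'd \<Rightarrow> real ^ 'd) \<Rightarrow> bool" where
  "surj_lin_isometry N L \<longleftrightarrow> linear L \<and> surj L \<and> (\<forall>x y. N (L x - L y) = N (x - y))"

definition congruent_in :: "(real ^ 'd \<Rightarrow> real) \<Rightarrow> (real ^ 'd) set \<Rightarrow> (real ^ 'd) set \<Rightarrow> bool" where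
  "congruent_in N X Y \<longleftrightarrow>
     (\<exists>L v. surj_lin_isometry N L \<and>
        (Y = (\<lambda>x. L x + v) ` X \<or> Y = (\<lambda>x. L (x + v)) ` X \<or>
         X = (\<lambda>x. L x + v) ` Y \<or> X = (\<lambda>x. L (x + v)) ` Y))"

definition cong_edges :: "(real ^ 'd \<Rightarrow> real) \<Rightarrow> (real ^ 'd) set set \<Rightarrow> (real ^ 'd) set set" where
  "cong_edges N \<S> = {T. \<exists>S\<in>\<S>. congruent_in N T S}"

definition proper_coloring :: "'a set \<Rightarrow> 'a set set \<Rightarrow> nat \<Rightarrow> ('a \<Rightarrow> nat) \<Rightarrow> bool" where
  "proper_coloring V E k c \<longleftrightarrow>
     (\<forall>x\<in>V. c x < k) \<and> (\<forall>T\<in>E. \<not> (\<exists>i. \<forall>x\<in>T. c x = i))"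

definition finite_chromatic :: "'a set \<Rightarrow> 'a set set \<Rightarrow> bool" where
  "finite_chromatic V E \<longleftrightarrow> (\<exists>k c. proper_coloring V E k c)"

end

theory Submission
  imports Defs
begin

text \<open>Every edge contains two points whose distance lies in a fixed finite set \<open>D\<close> of positive
  reals: a congruent copy of \<open>S \<in> \<S>\<close> realises the distance between two chosen distinct points
  of \<open>S\<close>. Since all norms on \<open>\<real>\<^sup>d\<close> are equivalent to the Euclidean one, colour \<open>\<real>\<^sup>d\<close> by the grid
  cell of side \<open>s\<close> containing a point, with cell coordinates reduced modulo \<open>m\<close>. For \<open>s\<close> small,
  two points in the same cell are closer than \<open>Min D\<close>; for \<open>m\<close> large, two points in distinct
  cells of the same colour are farther apart than \<open>Max D\<close>. So no edge is monochromatic, and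
  only \<open>m\<^sup>d\<close> colours are used.\<close>

lemma is_norm_zero: "is_norm N \<Longrightarrow> N 0 = 0"
  unfolding is_norm_def by blast

lemma is_norm_scaleR: "is_norm N \<Longrightarrow> N (a *\<^sub>R x) = \<bar>a\<bar> * N x"
  unfolding is_norm_def by blast

lemma is_norm_triangle: "is_norm N \<Longrightarrow> N (x + y) \<le> N x + N y"
  unfolding is_norm_def by blast

lemma is_norm_minus: "is_norm N \<Longrightarrow> N (- x) = N x"
  using is_norm_scaleR[of N "-1" x] by simp

lemma is_norm_minus_commute: "is_norm N \<Longrightarrow> N (x - y) = N (y - x)"
  using is_norm_minus[of N "y - x"] by simp

lemma is_norm_nonneg: "is_norm N \<Longrightarrow> 0 \<le> N x"
  using is_norm_triangle[of N x "- x"] is_norm_minus[of N x] is_norm_zero[of N] by simp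

lemma is_norm_pos: "is_norm N \<Longrightarrow> x \<noteq> 0 \<Longrightarrow> 0 < N x"
  using is_norm_nonneg[of N x] unfolding is_norm_def by force

lemma is_norm_sum:
  assumes "is_norm N"
  shows "N (sum f A) \<le> (\<Sum>i\<in>A. N (f i))"
proof (induction A rule: infinite_finite_induct)
  case (insert a A)
  then show ?case using is_norm_triangle[OF assms, of "f a" "sum f A"] by simp
qed (simp_all add: is_norm_zero[OF assms])

lemma is_norm_le_norm:
  fixes N :: "real ^ 'd \<Rightarrow> real"
  assumes "is_norm N"
  obtains K where "0 < K" "\<And>x. N x \<le> K * norm x"
proof
  define K where "K = 1 + (\<Sum>b\<in>Basis. N (b :: real ^ 'd))"
  show "0 < K"
    unfolding K_def using is_norm_nonneg[OF assms] by (simp add: add_pos_nonneg sum_nonneg)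
  fix x :: "real ^ 'd"
  have "N x = N (\<Sum>b\<in>Basis. (x \<bullet> b) *\<^sub>R b)"
    by (simp add: euclidean_representation)
  also have "\<dots> \<le> (\<Sum>b\<in>Basis. N ((x \<bullet> b) *\<^sub>R b))"
    by (rule is_norm_sum[OF assms])
  also have "\<dots> = (\<Sum>b\<in>Basis. \<bar>x \<bullet> b\<bar> * N b)"
    by (simp add: is_norm_scaleR[OF assms])
  also have "\<dots> \<le> (\<Sum>b\<in>Basis. norm x * N b)"
    by (intro sum_mono mult_right_mono) (auto simp: Basis_le_norm is_norm_nonneg[OF assms])
  also have "\<dots> = norm x * (\<Sum>b\<in>Basis. N b)"
    by (simp add: sum_distrib_left)
  also have "\<dots> \<le> K * norm x"
    unfolding K_def by (simp add: algebra_simps)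
  finally show "N x \<le> K * norm x" .
qed

lemma is_norm_continuous_on:
  fixes N :: "real ^ 'd \<Rightarrow> real"
  assumes "is_norm N"
  shows "continuous_on A N"
proof -
  obtain K where K: "0 < K" "\<And>x. N x \<le> K * norm x"
    using is_norm_le_norm[OF assms] by blast
  have "dist (N x) (N y) \<le> K * dist x y" for x y
  proof -
    have "N x \<le> N y + N (x - y)" "N y \<le> N x + N (x - y)"
      using is_norm_triangle[OF assms, of y "x - y"] is_norm_triangle[OF assms, of x "y - x"]
        is_norm_minus_commute[OF assms, of x y] by simp_all
    then show ?thesis using K(2)[of "x - y"] by (simp add: dist_real_def dist_norm abs_le_iff)
  qed
  then have "K-lipschitz_on A N"
    using K(1) by (intro lipschitz_onI) auto
  then show ?thesis by (rule lipschitz_on_continuous_on)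
qed

text \<open>The minimum of \<open>N\<close> on the compact unit sphere gives the constant.\<close>
lemma norm_le_is_norm:
  fixes N :: "real ^ 'd \<Rightarrow> real"
  assumes "is_norm N"
  obtains c where "0 < c" "\<And>x. c * norm x \<le> N x"
proof -
  obtain b :: "real ^ 'd" where "b \<in> Basis" using nonempty_Basis by blast
  then have "sphere (0 :: real ^ 'd) 1 \<noteq> {}" by auto
  then obtain x0 where x0: "x0 \<in> sphere 0 1" "\<And>y. y \<in> sphere 0 1 \<Longrightarrow> N x0 \<le> N y"
    using continuous_attains_inf[OF compact_sphere _ is_norm_continuous_on[OF assms]] by blast
  have "N x0 * norm x \<le> N x" for x
  proof (cases "x = 0")
    case False
    then have "N x0 \<le> N ((1 / norm x) *\<^sub>R x)" by (intro x0(2)) simp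
    also have "\<dots> = N x / norm x" by (simp add: is_norm_scaleR[OF assms])
    finally show ?thesis using False by (simp add: field_simps)
  qed (simp add: is_norm_zero[OF assms])
  moreover have "0 < N x0" using x0(1) by (intro is_norm_pos[OF assms]) auto
  ultimately show ?thesis using that by blast
qed

lemma congruent_in_imp_isometric_image:
  assumes "congruent_in N X Y"
  obtains \<phi> where "\<And>x y. N (\<phi> x - \<phi> y) = N (x - y)" "Y = \<phi> ` X \<or> X = \<phi> ` Y"
proof -
  obtain L v where L: "\<And>x y. N (L x - L y) = N (x - y)" and
    images: "Y = (\<lambda>x. L x + v) ` X \<or> Y = (\<lambda>x. L (x + v)) ` X \<or>
             X = (\<lambda>x. L x + v) ` Y \<or> X = (\<lambda>x. L (x + v)) ` Y"
    using assms unfolding congruent_in_def surj_lin_isometry_def by blast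
  define \<phi>\<^sub>1 where "\<phi>\<^sub>1 x = L x + v" for x
  define \<phi>\<^sub>2 where "\<phi>\<^sub>2 x = L (x + v)" for x
  have "N (\<phi>\<^sub>1 x - \<phi>\<^sub>1 y) = N (x - y)" "N (\<phi>\<^sub>2 x - \<phi>\<^sub>2 y) = N (x - y)" for x y
    unfolding \<phi>\<^sub>1_def \<phi>\<^sub>2_def using L[of x y] L[of "x + v" "y + v"] by simp_all
  moreover have "Y = \<phi>\<^sub>1 ` X \<or> Y = \<phi>\<^sub>2 ` X \<or> X = \<phi>\<^sub>1 ` Y \<or> X = \<phi>\<^sub>2 ` Y"
    using images unfolding \<phi>\<^sub>1_def[abs_def] \<phi>\<^sub>2_def[abs_def] .
  ultimately show thesis using that by blast
qed

lemma congruent_in_realises_distance: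
  assumes "congruent_in N T S" "x \<in> S" "y \<in> S"
  shows "\<exists>a\<in>T. \<exists>b\<in>T. N (a - b) = N (x - y)"
proof -
  obtain \<phi> where \<phi>: "\<And>x y. N (\<phi> x - \<phi> y) = N (x - y)" "S = \<phi> ` T \<or> T = \<phi> ` S"
    using congruent_in_imp_isometric_image[OF assms(1)] by blast
  from \<phi>(2) show ?thesis
  proof
    assume "S = \<phi> ` T"
    with assms(2,3) obtain a b where "a \<in> T" "b \<in> T" "x = \<phi> a" "y = \<phi> b" by blast
    with \<phi>(1) show ?thesis by metis
  next
    assume "T = \<phi> ` S"
    with assms(2,3) \<phi>(1) show ?thesis by blast
  qed
qed

lemma floor_divide_eq_imp_dist_le:
  fixes u w s :: real
  assumes "\<lfloor>u / s\<rfloor> = \<lfloor>w / s\<rfloor>" "0 < s"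
  shows "\<bar>u - w\<bar> \<le> s"
proof -
  have "\<bar>u / s - w / s\<bar> < 1"
    using assms(1) floor_correct[of "u / s"] floor_correct[of "w / s"] by linarith
  with assms(2) show ?thesis by (simp add: diff_divide_distrib[symmetric] field_simps)
qed

lemma floor_divide_mod_eq_imp_dist_gt:
  fixes u w s :: real and m :: int
  assumes "\<lfloor>u / s\<rfloor> mod m = \<lfloor>w / s\<rfloor> mod m" "\<lfloor>u / s\<rfloor> \<noteq> \<lfloor>w / s\<rfloor>" "0 < s" "0 < m"
  shows "(m - 1) * s < \<bar>u - w\<bar>"
proof -
  have "m dvd \<lfloor>u / s\<rfloor> - \<lfloor>w / s\<rfloor>" using assms(1) by (simp add: mod_eq_dvd_iff)
  then have "m \<le> \<bar>\<lfloor>u / s\<rfloor> - \<lfloor>w / s\<rfloor>\<bar>"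
    using dvd_imp_le_int[of "\<lfloor>u / s\<rfloor> - \<lfloor>w / s\<rfloor>" m] assms(2,4) by simp
  then have "m - 1 < \<bar>u / s - w / s\<bar>"
    using floor_correct[of "u / s"] floor_correct[of "w / s"] by linarith
  with assms(3) show ?thesis by (simp add: diff_divide_distrib[symmetric] field_simps)
qed

definition grid_colour :: "real \<Rightarrow> int \<Rightarrow> real ^ 'd \<Rightarrow> ('d \<Rightarrow> int)" where
  "grid_colour s m x = (\<lambda>i. \<lfloor>x $ i / s\<rfloor> mod m)"

lemma finite_range_grid_colour:
  assumes "0 < m"
  shows "finite (range (grid_colour s m :: real ^ 'd \<Rightarrow> _))"
proof (rule finite_subset)
  show "range (grid_colour s m) \<subseteq> Pi\<^sub>E UNIV (\<lambda>_ :: 'd. {0..<m})"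
    using assms by (auto simp: grid_colour_def)
qed (simp add: finite_PiE)

lemma grid_colour_eq_imp_near_or_far:
  fixes x y :: "real ^ 'd" and s :: real and m :: int
  assumes "grid_colour s m x = grid_colour s m y" "0 < s" "0 < m"
  shows "norm (x - y) \<le> CARD('d) * s \<or> (m - 1) * s < norm (x - y)"
proof (cases "\<forall>i. \<lfloor>x $ i / s\<rfloor> = \<lfloor>y $ i / s\<rfloor>")
  case True
  have "norm (x - y) \<le> (\<Sum>i\<in>UNIV. \<bar>(x - y) $ i\<bar>)" by (rule norm_le_l1_cart)
  also have "\<dots> \<le> (\<Sum>i\<in>(UNIV :: 'd set). s)"
    using True floor_divide_eq_imp_dist_le assms(2) by (intro sum_mono) simp
  finally show ?thesis by simp
next
  case False
  then obtain i where "\<lfloor>x $ i / s\<rfloor> \<noteq> \<lfloor>y $ i / s\<rfloor>" by blast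
  moreover have "\<lfloor>x $ i / s\<rfloor> mod m = \<lfloor>y $ i / s\<rfloor> mod m"
    using fun_cong[OF assms(1), of i] unfolding grid_colour_def .
  ultimately have "(m - 1) * s < \<bar>(x - y) $ i\<bar>"
    using floor_divide_mod_eq_imp_dist_gt assms(2,3) by simp
  also have "\<dots> \<le> norm (x - y)" by (rule component_le_norm_cart)
  finally show ?thesis by simp
qed

lemma is_norm_grid_colour_avoids_range:
  fixes N :: "real ^ 'd \<Rightarrow> real"
  assumes "is_norm N" "0 < \<delta>" "\<delta> \<le> M"
  obtains s m where "0 < m"
    "\<And>x y. grid_colour s m x = grid_colour s m y \<Longrightarrow> N (x - y) < \<delta> \<or> M < N (x - y)"
proof -
  obtain K where K: "0 < K" "\<And>x. N x \<le> K * norm x"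
    using is_norm_le_norm[OF assms(1)] by blast
  obtain c where c: "0 < c" "\<And>x. c * norm x \<le> N x"
    using norm_le_is_norm[OF assms(1)] by blast
  define s where "s = \<delta> / (2 * K * CARD('d))"
  define m where "m = \<lceil>M / (c * s)\<rceil> + 1"
  have "0 < s" unfolding s_def using assms(2) K(1) by simp
  have "M / (c * s) \<le> m - 1" unfolding m_def by simp
  then have M_le: "M \<le> c * ((m - 1) * s)"
    using \<open>0 < s\<close> c(1) by (simp add: pos_divide_le_eq mult_ac)
  have "0 \<le> M / (c * s)" using assms(2,3) \<open>0 < s\<close> c(1) by simp
  then have "0 < m" unfolding m_def by linarith
  moreover have "N (x - y) < \<delta> \<or> M < N (x - y)"
    if "grid_colour s m x = grid_colour s m y" for x y
    using grid_colour_eq_imp_near_or_far[OF that \<open>0 < s\<close> \<open>0 < m\<close>]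
  proof
    assume "norm (x - y) \<le> CARD('d) * s"
    have "N (x - y) \<le> K * norm (x - y)" by (rule K(2))
    also have "\<dots> \<le> K * (CARD('d) * s)" using \<open>norm (x - y) \<le> _\<close> K(1) by simp
    also have "\<dots> = \<delta> / 2" unfolding s_def using K(1) by simp
    finally show ?thesis using assms(2) by simp
  next
    assume "(m - 1) * s < norm (x - y)"
    note M_le
    also have "c * ((m - 1) * s) < c * norm (x - y)" using \<open>_ < norm (x - y)\<close> c(1) by simp
    also have "\<dots> \<le> N (x - y)" by (rule c(2))
    finally show ?thesis by simp
  qed
  ultimately show thesis using that by blast
qed

lemma is_norm_finite_colouring_avoids_distances:
  fixes N :: "real ^ 'd \<Rightarrow> real"
  assumes "is_norm N" "finite D" "\<forall>r\<in>D. 0 < r"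
  obtains f :: "real ^ 'd \<Rightarrow> ('d \<Rightarrow> int)"
    where "finite (range f)" "\<And>x y. f x = f y \<Longrightarrow> N (x - y) \<notin> D"
proof (cases "D = {}")
  case True
  then show thesis using that[of "\<lambda>_. \<lambda>_. 0"] by simp
next
  case False
  have "0 < Min D" "Min D \<le> Max D" using False assms(2,3) by simp_all
  then obtain s m where "0 < m" and avoids:
    "\<And>x y. grid_colour s m x = grid_colour s m y \<Longrightarrow> N (x - y) < Min D \<or> Max D < N (x - y)"
    by (rule is_norm_grid_colour_avoids_range[OF assms(1)]) blast
  show thesis
  proof (rule that[of "grid_colour s m"])
    show "finite (range (grid_colour s m))" using finite_range_grid_colour[OF \<open>0 < m\<close>] .
    fix x y :: "real ^ 'd" assume "grid_colour s m x = grid_colour s m y"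
    then have "N (x - y) < Min D \<or> Max D < N (x - y)" by (rule avoids)
    moreover have "Min D \<le> r \<and> r \<le> Max D" if "r \<in> D" for r
      using that assms(2) by simp
    ultimately show "N (x - y) \<notin> D" by force
  qed
qed

lemma finite_chromatic_if_finite_range:
  assumes "finite (range f)" "\<And>T. T \<in> E \<Longrightarrow> \<exists>x\<in>T. \<exists>y\<in>T. f x \<noteq> f y"
  shows "finite_chromatic V E"
proof -
  obtain g where g: "bij_betw g (range f) {0..<card (range f)}"
    using ex_bij_betw_finite_nat[OF assms(1)] by blast
  have "proper_coloring V E (card (range f)) (g \<circ> f)"
    unfolding proper_coloring_def
  proof (intro conjI ballI notI)
    fix x show "(g \<circ> f) x < card (range f)"
      using bij_betwE[OF g] by simp
  next
    fix T assume "T \<in> E" and mono: "\<exists>i. \<forall>x\<in>T. (g \<circ> f) x = i"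
    then obtain x y where "x \<in> T" "y \<in> T" "f x \<noteq> f y" using assms(2) by blast
    moreover have "g (f x) \<noteq> g (f y)"
      using \<open>f x \<noteq> f y\<close> bij_betw_imp_inj_on[OF g] by (simp add: inj_on_eq_iff)
    ultimately show False using mono by auto
  qed
  then show ?thesis unfolding finite_chromatic_def by blast
qed

theorem lemma4p2:
  fixes N :: "real ^ 'd \<Rightarrow> real" and \<S> :: "(real ^ 'd) set set"
  assumes "is_norm N"
    and "finite \<S>"
    and "\<forall>S\<in>\<S>. \<exists>x\<in>S. \<exists>y\<in>S. x \<noteq> y"
  shows "finite_chromatic UNIV (cong_edges N \<S>)"
proof -
  obtain p q where pq: "\<And>S. S \<in> \<S> \<Longrightarrow> p S \<in> S \<and> q S \<in> S \<and> p S \<noteq> q S"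
    using assms(3) by metis
  define D where "D = (\<lambda>S. N (p S - q S)) ` \<S>"
  have "finite D" "\<forall>r\<in>D. 0 < r"
    unfolding D_def using assms(2) pq is_norm_pos[OF assms(1)] by auto
  then obtain f :: "real ^ 'd \<Rightarrow> ('d \<Rightarrow> int)"
    where f: "finite (range f)" "\<And>x y. f x = f y \<Longrightarrow> N (x - y) \<notin> D"
    using is_norm_finite_colouring_avoids_distances[OF assms(1)] by blast
  have "\<exists>a\<in>T. \<exists>b\<in>T. f a \<noteq> f b" if T: "T \<in> cong_edges N \<S>" for T
  proof -
    obtain S where S: "S \<in> \<S>" "congruent_in N T S"
      using T unfolding cong_edges_def by blast
    then obtain a b where "a \<in> T" "b \<in> T" "N (a - b) \<in> D"
      using congruent_in_realises_distance[OF S(2)] pq unfolding D_def by blast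
    with f(2) show ?thesis by blast
  qed
  with f(1) show ?thesis by (rule finite_chromatic_if_finite_range)
qed

end
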